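(* For each integer $s\geq 2$, \[\lim_{t\to\infty}\sqrt[t]{A_{321}(K_{s,t}^\beta)}=2^s.\]
   Context: The comb $K_{s,t}$ has elements $e_{i,j}$, $1\le i\le s$, $1\le j\le t$, with partial order generated by the covers $e_{i,1}\lessdot e_{i+1,1}$ ($1\le i\le s-1$) and $e_{i,j}\lessdot e_{i,j+1}$ ($1\le j\le t-1$). $K^\beta_{s,t}$ is the labeled poset on $[st]$ obtained by giving $e_{i,j}$ the label $(i-1)t+j$. A linear extension is a permutation of $[st]$ in which $x$ precedes $y$ whenever $x<y$ in the poset; $A_{321}(P)$ is the number of linear extensions of $P$ avoiding the pattern $321$. *)

theory Defs
  imports Complex_Main
begin

(* label of the comb element e_{i,j}, 1 <= i <= s, 1 <= j <= t *)
definition comb_label :: "nat \<Rightarrow> nat \<Rightarrow> nat \<Rightarrow> nat" where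
  "comb_label t i j = (i - 1) * t + j"

definition comb_covers :: "nat \<Rightarrow> nat \<Rightarrow> (nat \<times> nat) set" where
  "comb_covers s t =
     {(comb_label t i 1, comb_label t (i + 1) 1) | i. 1 \<le> i \<and> i \<le> s - 1}
   \<union> {(comb_label t i j, comb_label t i (j + 1)) | i j. 1 \<le> i \<and> i \<le> s \<and> 1 \<le> j \<and> j \<le> t - 1}"

definition comb_less :: "nat \<Rightarrow> nat \<Rightarrow> (nat \<times> nat) set" where
  "comb_less s t = (comb_covers s t)\<^sup>+"

definition linear_extensions :: "nat \<Rightarrow> nat \<Rightarrow> nat list set" where
  "linear_extensions s t =
     {w. distinct w \<and> set w = {1..s * t} \<and>
         (\<forall>a b. a < length w \<and> b < length w \<and> (w ! a, w ! b) \<in> comb_less s t \<longrightarrow> a < b)}"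

definition contains_321 :: "nat list \<Rightarrow> bool" where
  "contains_321 w \<longleftrightarrow>
     (\<exists>a b c. a < b \<and> b < c \<and> c < length w \<and> w ! a > w ! b \<and> w ! b > w ! c)"

definition A321_comb :: "nat \<Rightarrow> nat \<Rightarrow> nat" where
  "A321_comb s t = card {w \<in> linear_extensions s t. \<not> contains_321 w}"

end

theory Submission
  imports Defs "HOL-Library.FuncSet" "HOL-Library.Multiset"
begin

text \<open>
  Record, for each entry of a linear extension \<open>w\<close> of the comb, the row it lies in. As
  every row is a chain, \<open>w\<close> is determined by this row word, and a 321-pattern of the row
  word is one of \<open>w\<close>. Conversely, each word over \<open>{1..s}\<close> containing every letter \<open>t\<close>
  times, in which every letter \<open>i + 1\<close> is preceded by some \<open>i\<close>, is the row word of a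
  linear extension (its standardization), which avoids 321 if the row word does.

  Upper bound: a 321-avoiding word is the union of two weakly increasing subsequences, its
  weak left-to-right maxima and the remaining letters, so it is determined by the set of
  positions of the maxima and the letter counts of both subsequences; there are at most
  \<open>2^(st) (st+1)^(2s)\<close> of them.

  Lower bound: cut the positions into \<open>s\<close> chunks of length \<open>t\<close> and let chunk \<open>c\<close> use only
  the letters \<open>max c 1\<close> and \<open>min (c+2) s\<close>, the larger one on a freely chosen half of the
  chunk. These words are 321-avoiding row words, and there are at least
  \<open>(2^t / (2t+2))^s\<close> of them.

  Both bounds are \<open>2^(st)\<close> up to factors polynomial in \<open>t\<close>, so their \<open>t\<close>-th roots tend
  to \<open>2^s\<close>.
\<close>

lemma sorted_eq_if_restrict_count_list_eq:
  fixes xs ys :: "'a::linorder list"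
  assumes "sorted xs" "sorted ys" "set xs \<subseteq> A" "set ys \<subseteq> A"
    and "restrict (count_list xs) A = restrict (count_list ys) A"
  shows "xs = ys"
proof -
  have "count_list xs k = count_list ys k" for k
  proof (cases "k \<in> A")
    case True
    then show ?thesis using fun_cong[OF assms(5), of k] by simp
  next
    case False
    then show ?thesis using assms(3,4) by (metis count_notin subsetD)
  qed
  then have "mset xs = mset ys" by (simp add: multiset_eq_iff count_mset)
  then show ?thesis using properties_for_sort assms(1,2) by metis
qed

lemma sorted_map_filter_upt:
  assumes "\<And>p q. p < q \<Longrightarrow> q < n \<Longrightarrow> P p \<Longrightarrow> P q \<Longrightarrow> f p \<le> f q"
  shows "sorted (map f (filter P [0..<n]))"
proof -
  have "sorted_wrt (\<lambda>p q. p < q \<and> q < n \<and> P p \<and> P q) (filter P [0..<n])"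
    by (rule sorted_wrt_filter[THEN sorted_wrt_mono_rel[rotated]]) (auto simp: sorted_wrt_iff_nth_less)
  then show ?thesis
    by (auto simp: sorted_wrt_map intro: sorted_wrt_mono_rel[rotated] assms)
qed

lemma nth_eq_if_subsequences_eq:
  assumes "length xs = n" "length ys = n"
    and "map ((!) xs) (filter P [0..<n]) = map ((!) ys) (filter P [0..<n])"
    and "map ((!) xs) (filter (\<lambda>p. \<not> P p) [0..<n]) = map ((!) ys) (filter (\<lambda>p. \<not> P p) [0..<n])"
  shows "xs = ys"
proof (rule nth_equalityI)
  show "length xs = length ys" using assms(1,2) by simp
  fix p assume "p < length xs"
  then show "xs ! p = ys ! p" using assms by (cases "P p") auto
qed

lemma list_eq_if_map_filter_eq:
  assumes "map f xs = map f ys" "\<And>k. filter (\<lambda>x. f x = k) xs = filter (\<lambda>x. f x = k) ys"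
  shows "xs = ys"
  using assms
proof (induction xs arbitrary: ys)
  case Nil
  then show ?case by simp
next
  case (Cons x xs)
  then obtain y ys' where ys: "ys = y # ys'" "f y = f x" "map f xs = map f ys'" by (cases ys) auto
  have "x = y" using Cons.prems(2)[of "f x"] ys(1,2) by simp
  have "filter (\<lambda>x. f x = k) xs = filter (\<lambda>x. f x = k) ys'" for k
    using Cons.prems(2)[of k] unfolding ys(1) \<open>x = y\<close> by (simp split: if_splits)
  then show ?case using Cons.IH[OF ys(3)] ys(1) \<open>x = y\<close> by simp
qed

lemma count_list_map_upt: "count_list (map f [0..<n]) k = (\<Sum>p<n. if f p = k then 1 else 0)"
  by (induction n) auto

lemma count_list_take_mono:
  assumes "m \<le> n"
  shows "count_list (take m xs) x \<le> count_list (take n xs) x"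
proof -
  have "take n xs = take m xs @ take (n - m) (drop m xs)"
    using assms by (metis le_add_diff_inverse take_add)
  then show ?thesis by (metis count_list_append le_add1)
qed

lemma count_list_take_Suc_nth:
  assumes "p < length xs"
  shows "count_list (take (Suc p) xs) (xs ! p) = Suc (count_list (take p xs) (xs ! p))"
  using assms by (simp add: take_Suc_conv_app_nth)

lemma count_list_take_nth_less:
  assumes "p < length xs"
  shows "count_list (take p xs) (xs ! p) < count_list xs (xs ! p)"
  using count_list_take_Suc_nth[OF assms] count_list_take_mono[of "Suc p" "length xs" xs "xs ! p"] assms
  by simp

lemma count_list_take_nth_strict_mono:
  assumes "a < b" "b < length xs" "xs ! a = xs ! b"
  shows "count_list (take a xs) (xs ! a) < count_list (take b xs) (xs ! b)"
  using count_list_take_Suc_nth[of a xs] count_list_take_mono[of "Suc a" b xs "xs ! a"] assms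
  by simp

lemma distinct_nth_less_if_trancl:
  assumes "distinct w"
    and covers: "\<And>u v. (u, v) \<in> r \<Longrightarrow> \<exists>a b. a < b \<and> b < length w \<and> w ! a = u \<and> w ! b = v"
    and "(w ! a, w ! b) \<in> r\<^sup>+" "a < length w" "b < length w"
  shows "a < b"
proof -
  define R where "R = {(w ! a, w ! b) | a b. a < b \<and> b < length w}"
  have "trans R"
  proof (rule transI)
    fix x y z assume "(x, y) \<in> R" "(y, z) \<in> R"
    then obtain a b b' c where "x = w ! a" "y = w ! b" "y = w ! b'" "z = w ! c"
      "a < b" "b < length w" "b' < c" "c < length w"
      unfolding R_def by auto
    moreover from this have "b = b'" using assms(1) by (simp add: nth_eq_iff_index_eq)
    ultimately have "x = w ! a" "z = w ! c" "a < c" "c < length w" by simp_all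
    then show "(x, z) \<in> R" unfolding R_def by blast
  qed
  moreover have "r \<subseteq> R"
  proof (rule subrelI)
    fix u v assume "(u, v) \<in> r"
    then obtain a b where "a < b" "b < length w" "u = w ! a" "v = w ! b" using covers by metis
    then show "(u, v) \<in> R" unfolding R_def by blast
  qed
  ultimately have "r\<^sup>+ \<subseteq> R" using trancl_mono trancl_id by blast
  then have "(w ! a, w ! b) \<in> R" using assms(3) by blast
  then obtain a' b' where "a' < b'" "b' < length w" "w ! a' = w ! a" "w ! b' = w ! b"
    unfolding R_def by auto
  then show ?thesis using assms(1,4,5) by (simp add: nth_eq_iff_index_eq)
qed

lemma sum_lessThan_mult_split:
  fixes h :: "nat \<Rightarrow> 'a::comm_monoid_add"
  shows "(\<Sum>p<s * t. h p) = (\<Sum>c<s. \<Sum>j<t. h (c * t + j))"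
proof -
  have "(\<Sum>p<s * t. h p) = (\<Sum>c<s. \<Sum>p\<in>{c * t..<c * t + t}. h p)"
    by (rule sum.nat_group[symmetric])
  also have "\<dots> = (\<Sum>c<s. \<Sum>j<t. h (c * t + j))"
    using sum.shift_bounds_nat_ivl[of h 0 "_ * t" t] by (simp add: lessThan_atLeast0 add.commute)
  finally show ?thesis .
qed

section \<open>321-avoiding words\<close>

lemma contains_321_map_mono:
  fixes f :: "nat \<Rightarrow> nat"
  assumes "mono f" "contains_321 (map f xs)"
  shows "contains_321 xs"
proof -
  obtain a b c where abc: "a < b" "b < c" "c < length xs" "f (xs ! a) > f (xs ! b)" "f (xs ! b) > f (xs ! c)"
    using assms(2) unfolding contains_321_def by auto
  have "xs ! a > xs ! b" "xs ! b > xs ! c"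
    using abc(4,5) assms(1) by (meson monoD not_le)+
  then show ?thesis using abc(1-3) unfolding contains_321_def by blast
qed

lemma not_contains_321_if_two_sorted_classes:
  fixes C :: "nat \<Rightarrow> bool"
  assumes "\<And>p q. p < q \<Longrightarrow> q < length xs \<Longrightarrow> C p = C q \<Longrightarrow> xs ! p \<le> xs ! q"
  shows "\<not> contains_321 xs"
proof
  assume "contains_321 xs"
  then obtain a b c where abc: "a < b" "b < c" "c < length xs" "xs ! b < xs ! a" "xs ! c < xs ! b"
    unfolding contains_321_def by blast
  consider "C a = C b" | "C b = C c" | "C a = C c" by (cases "C a"; cases "C b"; cases "C c") auto
  then show False
    using assms[of a b] assms[of b c] assms[of a c] abc by cases auto
qed

definition weak_ltr_max :: "nat list \<Rightarrow> nat \<Rightarrow> bool" where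
  "weak_ltr_max xs p \<longleftrightarrow> (\<forall>q<p. xs ! q \<le> xs ! p)"

lemma sorted_weak_ltr_maxima:
  "sorted (map ((!) xs) (filter (weak_ltr_max xs) [0..<length xs]))"
  by (rule sorted_map_filter_upt) (simp add: weak_ltr_max_def)

lemma sorted_not_weak_ltr_maxima:
  assumes "\<not> contains_321 xs"
  shows "sorted (map ((!) xs) (filter (\<lambda>p. \<not> weak_ltr_max xs p) [0..<length xs]))"
proof (rule sorted_map_filter_upt)
  fix p q assume pq: "p < q" "q < length xs" and "\<not> weak_ltr_max xs p"
  then obtain r where "r < p" "xs ! r > xs ! p" by (auto simp: weak_ltr_max_def not_le)
  then show "xs ! p \<le> xs ! q"
    using assms pq unfolding contains_321_def by (metis not_le)
qed

definition ltr_encoding :: "nat set \<Rightarrow> nat list \<Rightarrow> nat set \<times> (nat \<Rightarrow> nat) \<times> (nat \<Rightarrow> nat)" where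
  "ltr_encoding A xs =
     (let I = filter (weak_ltr_max xs) [0..<length xs];
          J = filter (\<lambda>p. \<not> weak_ltr_max xs p) [0..<length xs]
      in ({p. p < length xs \<and> weak_ltr_max xs p},
          restrict (count_list (map ((!) xs) I)) A,
          restrict (count_list (map ((!) xs) J)) A))"

lemma ltr_encoding_inj_on_321_avoiding:
  "inj_on (ltr_encoding A) {xs. length xs = n \<and> set xs \<subseteq> A \<and> \<not> contains_321 xs}"
proof (rule inj_onI)
  fix xs ys
  assume "xs \<in> {xs. length xs = n \<and> set xs \<subseteq> A \<and> \<not> contains_321 xs}"
    and "ys \<in> {xs. length xs = n \<and> set xs \<subseteq> A \<and> \<not> contains_321 xs}"
    and enc: "ltr_encoding A xs = ltr_encoding A ys"
  then have xs: "length xs = n" "set xs \<subseteq> A" "\<not> contains_321 xs"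
    and ys: "length ys = n" "set ys \<subseteq> A" "\<not> contains_321 ys" by auto
  let ?I = "\<lambda>zs. filter (weak_ltr_max zs) [0..<n]"
  let ?J = "\<lambda>zs. filter (\<lambda>p. \<not> weak_ltr_max zs p) [0..<n]"
  have enc': "{p. p < n \<and> weak_ltr_max xs p} = {p. p < n \<and> weak_ltr_max ys p}"
    "restrict (count_list (map ((!) xs) (?I xs))) A = restrict (count_list (map ((!) ys) (?I ys))) A"
    "restrict (count_list (map ((!) xs) (?J xs))) A = restrict (count_list (map ((!) ys) (?J ys))) A"
    using enc unfolding ltr_encoding_def Let_def xs(1) ys(1) prod.inject by blast+
  have "weak_ltr_max ys p = weak_ltr_max xs p" if "p < n" for p
    using enc'(1) that by blast
  then have same_maxima: "?I ys = ?I xs" "?J ys = ?J xs"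
    by (auto intro: filter_cong)
  have sets: "set (map ((!) zs) is) \<subseteq> A" if "length zs = n" "set zs \<subseteq> A" "set is \<subseteq> {..<n}" for zs "is"
    using that by (auto dest: nth_mem)
  show "xs = ys"
  proof (rule nth_eq_if_subsequences_eq[OF xs(1) ys(1)])
    show "map ((!) xs) (?I xs) = map ((!) ys) (?I xs)"
      using sorted_weak_ltr_maxima[of xs, unfolded xs(1)] sorted_weak_ltr_maxima[of ys, unfolded ys(1)]
        enc'(2) xs ys
      unfolding same_maxima by (intro sorted_eq_if_restrict_count_list_eq sets) auto
    show "map ((!) xs) (?J xs) = map ((!) ys) (?J xs)"
      using sorted_not_weak_ltr_maxima[OF xs(3), unfolded xs(1)]
        sorted_not_weak_ltr_maxima[OF ys(3), unfolded ys(1)] enc'(3) xs ys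
      unfolding same_maxima by (intro sorted_eq_if_restrict_count_list_eq sets) auto
  qed
qed

lemma card_321_avoiding_words_le:
  assumes "finite A"
  shows "card {xs. length xs = n \<and> set xs \<subseteq> A \<and> \<not> contains_321 xs} \<le> 2 ^ n * (n + 1) ^ (2 * card A)"
proof -
  let ?T = "Pow {..<n} \<times> (A \<rightarrow>\<^sub>E {..n}) \<times> (A \<rightarrow>\<^sub>E {..n})"
  have "ltr_encoding A ` {xs. length xs = n \<and> set xs \<subseteq> A \<and> \<not> contains_321 xs} \<subseteq> ?T"
  proof (rule image_subsetI)
    fix xs assume "xs \<in> {xs. length xs = n \<and> set xs \<subseteq> A \<and> \<not> contains_321 xs}"
    then have "length xs = n" by simp
    moreover have "count_list (map ((!) xs) (filter P [0..<length xs])) k \<le> length xs" for P k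
      using length_filter_le[of P "[0..<length xs]"] by (intro order_trans[OF count_le_length]) simp
    ultimately show "ltr_encoding A xs \<in> ?T" by (auto simp: ltr_encoding_def Let_def)
  qed
  then have "card {xs. length xs = n \<and> set xs \<subseteq> A \<and> \<not> contains_321 xs} \<le> card ?T"
    using assms by (intro card_inj_on_le[OF ltr_encoding_inj_on_321_avoiding] finite_cartesian_product
        finite_PiE) auto
  also have "card ?T = 2 ^ n * (n + 1) ^ (2 * card A)"
    using assms by (simp add: card_cartesian_product card_Pow card_PiE power_add mult_2)
  finally show ?thesis .
qed

definition comb_row :: "nat \<Rightarrow> nat \<Rightarrow> nat" where
  "comb_row t v = (v - 1) div t + 1"

lemma comb_row_mono: "mono (comb_row t)"
  by (rule monoI) (simp add: comb_row_def div_le_mono)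

lemma comb_row_range:
  assumes "v \<in> {1..s * t}"
  shows "comb_row t v \<in> {1..s}"
proof -
  have "v - 1 < s * t" using assms by auto
  then show ?thesis using less_mult_imp_div_less[of "v - 1" s t] by (simp add: comb_row_def)
qed

lemma comb_row_label:
  assumes "1 \<le> i" "1 \<le> j" "j \<le> t"
  shows "comb_row t (comb_label t i j) = i"
proof -
  obtain i0 j0 where "i = Suc i0" "j = Suc j0" using assms by (metis Suc_le_D One_nat_def)
  then show ?thesis using assms by (simp add: comb_row_def comb_label_def)
qed

lemma comb_label_inject:
  assumes "1 \<le> i" "1 \<le> j" "j \<le> t" "1 \<le> i'" "1 \<le> j'" "j' \<le> t"
    and "comb_label t i j = comb_label t i' j'"
  shows "i = i' \<and> j = j'"
  using comb_row_label[of i j t] comb_row_label[of i' j' t] assms by (simp add: comb_label_def)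

lemma comb_label_range:
  assumes "1 \<le> i" "i \<le> s" "1 \<le> j" "j \<le> t"
  shows "comb_label t i j \<in> {1..s * t}"
proof -
  have "(i - 1) * t + t \<le> s * t"
    using assms mult_le_mono1[of i s t] by (simp add: diff_mult_distrib)
  then show ?thesis using assms by (simp add: comb_label_def)
qed

lemma comb_label_decompose:
  assumes "t \<ge> 1" "v \<ge> 1"
  shows "v = comb_label t (comb_row t v) ((v - 1) mod t + 1)"
  using assms by (simp add: comb_label_def comb_row_def)

lemma comb_less_same_row_labels:
  assumes "1 \<le> i" "i \<le> s" "1 \<le> j" "j < j'" "j' \<le> t"
  shows "(comb_label t i j, comb_label t i j') \<in> comb_less s t"
  using assms(4,5)
proof (induction j')
  case 0
  then show ?case by simp
next
  case (Suc j')
  have cover: "(comb_label t i j', comb_label t i (Suc j')) \<in> comb_covers s t"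
    using Suc.prems assms(1-3) unfolding comb_covers_def by fastforce
  show ?case
  proof (cases "j = j'")
    case True
    then show ?thesis using cover unfolding comb_less_def by auto
  next
    case False
    then show ?thesis using Suc cover unfolding comb_less_def by (auto intro: trancl_into_trancl)
  qed
qed

lemma comb_less_same_row:
  assumes "1 \<le> u" "u < v" "v \<le> s * t" "comb_row t u = comb_row t v"
  shows "(u, v) \<in> comb_less s t"
proof -
  have t: "t \<ge> 1" using assms by (cases t) auto
  define i where "i = comb_row t u"
  have "v - 1 < s * t" using assms by linarith
  then have i: "1 \<le> i" "i \<le> s"
    using assms t less_mult_imp_div_less[of "v - 1" s t] by (auto simp: i_def comb_row_def)
  define q where "q = (u - 1) div t"
  have "u - 1 = q * t + (u - 1) mod t" by (simp add: q_def)
  moreover have "v - 1 = q * t + (v - 1) mod t" using assms(4) by (simp add: q_def comb_row_def)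
  ultimately have "(u - 1) mod t < (v - 1) mod t" using assms(1,2) by linarith
  moreover have "(v - 1) mod t < t" using t by simp
  ultimately have "(comb_label t i ((u - 1) mod t + 1), comb_label t i ((v - 1) mod t + 1)) \<in> comb_less s t"
    by (intro comb_less_same_row_labels[OF i]) auto
  moreover have "comb_label t i ((u - 1) mod t + 1) = u" "comb_label t i ((v - 1) mod t + 1) = v"
    using comb_label_decompose[OF t, of u] comb_label_decompose[OF t, of v] assms
    unfolding i_def by auto
  ultimately show ?thesis by simp
qed

section \<open>Upper bound\<close>

lemma linear_extensionD:
  assumes "w \<in> linear_extensions s t"
  shows "distinct w" "set w = {1..s * t}" "length w = s * t"
    "\<And>a b. a < length w \<Longrightarrow> b < length w \<Longrightarrow> (w ! a, w ! b) \<in> comb_less s t \<Longrightarrow> a < b"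
proof -
  show d: "distinct w" and st: "set w = {1..s * t}" using assms by (simp_all add: linear_extensions_def)
  show "length w = s * t" using distinct_card[OF d] st by simp
  show "\<And>a b. a < length w \<Longrightarrow> b < length w \<Longrightarrow> (w ! a, w ! b) \<in> comb_less s t \<Longrightarrow> a < b"
    using assms unfolding linear_extensions_def by blast
qed

lemma linear_extension_row_sorted:
  assumes "w \<in> linear_extensions s t"
  shows "sorted_wrt (<) (filter (\<lambda>v. comb_row t v = k) w)"
proof -
  note w = linear_extensionD[OF assms]
  have "sorted_wrt (\<lambda>u v. comb_row t u = comb_row t v \<longrightarrow> u < v) w"
  proof (unfold sorted_wrt_iff_nth_less, intro allI impI)
    fix a b assume ab: "a < b" "b < length w" and row: "comb_row t (w ! a) = comb_row t (w ! b)"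
    have "w ! a \<noteq> w ! b" using w(1) ab nth_eq_iff_index_eq by fastforce
    moreover have "w ! a \<in> {1..s * t}" "w ! b \<in> {1..s * t}" using w(2) ab nth_mem[of a w] nth_mem[of b w] by simp_all
    moreover have "(w ! b, w ! a) \<notin> comb_less s t" using w(4)[of b a] ab by auto
    ultimately show "w ! a < w ! b" using comb_less_same_row[of "w ! b" "w ! a" s t] row by fastforce
  qed
  then show ?thesis by (rule sorted_wrt_filter[THEN sorted_wrt_mono_rel[rotated]]) simp
qed

lemma linear_extension_eq_if_rows_eq:
  assumes "w \<in> linear_extensions s t" "w' \<in> linear_extensions s t"
    and "map (comb_row t) w = map (comb_row t) w'"
  shows "w = w'"
proof (rule list_eq_if_map_filter_eq[OF assms(3)])
  fix k
  show "filter (\<lambda>v. comb_row t v = k) w = filter (\<lambda>v. comb_row t v = k) w'"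
    using linear_extension_row_sorted[OF assms(1), of k] linear_extension_row_sorted[OF assms(2), of k]
      linear_extensionD(2)[OF assms(1)] linear_extensionD(2)[OF assms(2)]
    by (intro sorted_distinct_set_unique) (auto simp: strict_sorted_iff)
qed

lemma A321_comb_le: "A321_comb s t \<le> 2 ^ (s * t) * (s * t + 1) ^ (2 * s)"
proof -
  let ?W = "{xs. length xs = s * t \<and> set xs \<subseteq> {1..s} \<and> \<not> contains_321 xs}"
  have "inj_on (map (comb_row t)) {w \<in> linear_extensions s t. \<not> contains_321 w}"
    by (auto intro: inj_onI linear_extension_eq_if_rows_eq)
  moreover have "map (comb_row t) ` {w \<in> linear_extensions s t. \<not> contains_321 w} \<subseteq> ?W"
  proof (rule image_subsetI)
    fix w assume "w \<in> {w \<in> linear_extensions s t. \<not> contains_321 w}"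
    then have w: "w \<in> linear_extensions s t" "\<not> contains_321 w" by auto
    have "set (map (comb_row t) w) \<subseteq> {1..s}"
      using comb_row_range linear_extensionD(2)[OF w(1)] by auto
    moreover have "\<not> contains_321 (map (comb_row t) w)"
      using contains_321_map_mono[OF comb_row_mono] w(2) by blast
    ultimately show "map (comb_row t) w \<in> ?W" using linear_extensionD(3)[OF w(1)] by simp
  qed
  moreover have "finite ?W"
    by (rule finite_subset[of _ "{xs. set xs \<subseteq> {1..s} \<and> length xs = s * t}"])
      (auto intro: finite_lists_length_eq)
  ultimately have "A321_comb s t \<le> card ?W"
    unfolding A321_comb_def by (intro card_inj_on_le)
  also have "\<dots> \<le> 2 ^ (s * t) * (s * t + 1) ^ (2 * card {1..s})"
    by (rule card_321_avoiding_words_le) simp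
  also have "\<dots> = 2 ^ (s * t) * (s * t + 1) ^ (2 * s)"
    by (simp only: card_atLeastAtMost diff_Suc_1)
  finally show ?thesis .
qed

section \<open>Standardization of row words\<close>

definition comb_standardize :: "nat \<Rightarrow> nat list \<Rightarrow> nat list" where
  "comb_standardize t bs =
     map (\<lambda>p. comb_label t (bs ! p) (count_list (take p bs) (bs ! p) + 1)) [0..<length bs]"

text \<open>
  The row words of linear extensions: the last condition reflects the covers between the
  first elements of consecutive rows.
\<close>

definition comb_row_word :: "nat \<Rightarrow> nat \<Rightarrow> nat list \<Rightarrow> bool" where
  "comb_row_word s t bs \<longleftrightarrow>
     set bs \<subseteq> {1..s} \<and> (\<forall>k\<in>{1..s}. count_list bs k = t) \<and>
     (\<forall>p<length bs. 2 \<le> bs ! p \<longrightarrow> bs ! p - 1 \<in> set (take p bs))"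

lemma comb_row_wordD:
  assumes "comb_row_word s t bs"
  shows "set bs \<subseteq> {1..s}" "\<And>k. k \<in> {1..s} \<Longrightarrow> count_list bs k = t"
    "\<And>p. p < length bs \<Longrightarrow> 2 \<le> bs ! p \<Longrightarrow> bs ! p - 1 \<in> set (take p bs)"
  using assms unfolding comb_row_word_def by blast+

lemma comb_row_word_length:
  assumes "comb_row_word s t bs"
  shows "length bs = s * t"
proof -
  have "length bs = (\<Sum>k\<in>{1..s}. count_list bs k)"
    using sum_count_set[OF comb_row_wordD(1)[OF assms]] by simp
  also have "\<dots> = s * t" using comb_row_wordD(2)[OF assms] by simp
  finally show ?thesis .
qed

lemma comb_row_word_nth:
  assumes "comb_row_word s t bs" "p < length bs"
  shows "1 \<le> bs ! p" "bs ! p \<le> s" "count_list (take p bs) (bs ! p) + 1 \<le> t"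
proof -
  have row: "bs ! p \<in> {1..s}" using comb_row_wordD(1)[OF assms(1)] nth_mem[OF assms(2)] by blast
  then show "1 \<le> bs ! p" "bs ! p \<le> s" by auto
  show "count_list (take p bs) (bs ! p) + 1 \<le> t"
    using count_list_take_nth_less[OF assms(2)] comb_row_wordD(2)[OF assms(1) row] by simp
qed

lemma comb_standardize_nth_label:
  assumes "comb_row_word s t bs" "p < length bs"
  shows "comb_standardize t bs ! p = comb_label t (bs ! p) (count_list (take p bs) (bs ! p) + 1)"
    and "comb_row t (comb_standardize t bs ! p) = bs ! p"
    and "comb_standardize t bs ! p \<in> {1..s * t}"
proof -
  show label: "comb_standardize t bs ! p = comb_label t (bs ! p) (count_list (take p bs) (bs ! p) + 1)"
    using assms(2) by (simp add: comb_standardize_def)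
  show "comb_row t (comb_standardize t bs ! p) = bs ! p"
    unfolding label by (rule comb_row_label) (use comb_row_word_nth[OF assms] in auto)
  show "comb_standardize t bs ! p \<in> {1..s * t}"
    unfolding label by (rule comb_label_range) (use comb_row_word_nth[OF assms] in auto)
qed

lemma length_comb_standardize [simp]: "length (comb_standardize t bs) = length bs"
  by (simp add: comb_standardize_def)

lemma map_comb_row_standardize:
  assumes "comb_row_word s t bs"
  shows "map (comb_row t) (comb_standardize t bs) = bs"
  by (rule nth_equalityI) (simp_all add: comb_standardize_nth_label(2)[OF assms])

lemma comb_standardize_nth_eq_label:
  assumes "comb_row_word s t bs" "a < length bs" "1 \<le> i" "1 \<le> j" "j \<le> t"
    and "comb_standardize t bs ! a = comb_label t i j"
  shows "bs ! a = i \<and> count_list (take a bs) (bs ! a) + 1 = j"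
  by (rule comb_label_inject)
    (use comb_row_word_nth[OF assms(1,2)] assms(3-6) comb_standardize_nth_label(1)[OF assms(1,2)] in auto)

lemma distinct_comb_standardize:
  assumes "comb_row_word s t bs"
  shows "distinct (comb_standardize t bs)"
proof (unfold distinct_conv_nth, intro allI impI)
  fix a b assume ab: "a < length (comb_standardize t bs)" "b < length (comb_standardize t bs)" "a \<noteq> b"
  show "comb_standardize t bs ! a \<noteq> comb_standardize t bs ! b"
  proof
    assume "comb_standardize t bs ! a = comb_standardize t bs ! b"
    then have "bs ! a = bs ! b \<and> count_list (take a bs) (bs ! a) + 1 = count_list (take b bs) (bs ! b) + 1"
      using comb_row_word_nth[OF assms, of b] comb_standardize_nth_label(1)[OF assms, of b] ab
      by (intro comb_standardize_nth_eq_label[OF assms]) auto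
    then show False
      using count_list_take_nth_strict_mono[of a b bs] count_list_take_nth_strict_mono[of b a bs] ab
      by (auto simp: nat_neq_iff)
  qed
qed

lemma set_comb_standardize:
  assumes "comb_row_word s t bs"
  shows "set (comb_standardize t bs) = {1..s * t}"
proof (rule card_subset_eq)
  show "set (comb_standardize t bs) \<subseteq> {1..s * t}"
    using comb_standardize_nth_label(3)[OF assms] by (auto simp: in_set_conv_nth)
  show "card (set (comb_standardize t bs)) = card {1..s * t}"
    using distinct_card[OF distinct_comb_standardize[OF assms]] comb_row_word_length[OF assms] by simp
qed simp

lemma comb_standardize_position:
  assumes "comb_row_word s t bs" "1 \<le> i" "i \<le> s" "1 \<le> j" "j \<le> t"
  obtains a where "a < length bs" "bs ! a = i" "count_list (take a bs) i + 1 = j"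
    "comb_standardize t bs ! a = comb_label t i j"
proof -
  have "comb_label t i j \<in> set (comb_standardize t bs)"
    using comb_label_range[OF assms(2-5)] set_comb_standardize[OF assms(1)] by simp
  then obtain a where a: "a < length bs" "comb_standardize t bs ! a = comb_label t i j"
    by (auto simp: in_set_conv_nth)
  then show ?thesis
    using comb_standardize_nth_eq_label[OF assms(1) a(1) assms(2,4,5) a(2)] that by auto
qed

lemma comb_standardize_respects_covers:
  assumes bs: "comb_row_word s t bs" and t: "1 \<le> t" and uv: "(u, v) \<in> comb_covers s t"
  shows "\<exists>a b. a < b \<and> b < length (comb_standardize t bs) \<and>
    comb_standardize t bs ! a = u \<and> comb_standardize t bs ! b = v"
  using uv unfolding comb_covers_def
proof (elim UnE CollectE exE conjE)
  fix i assume uv: "(u, v) = (comb_label t i 1, comb_label t (i + 1) 1)" and i: "1 \<le> i" "i \<le> s - 1"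
  have "i + 1 \<le> s" using i by linarith
  obtain a where a: "a < length bs" "bs ! a = i" "count_list (take a bs) i = 0"
    "comb_standardize t bs ! a = u"
    using comb_standardize_position[OF bs, of i 1] \<open>i + 1 \<le> s\<close> i t uv by auto
  obtain b where b: "b < length bs" "bs ! b = i + 1" "comb_standardize t bs ! b = v"
    using comb_standardize_position[OF bs, of "i + 1" 1] \<open>i + 1 \<le> s\<close> t uv by auto
  obtain a' where a': "a' < b" "bs ! a' = i"
    using comb_row_wordD(3)[OF bs b(1)] b(2) i by (auto simp: in_set_conv_nth)
  have "a \<le> a'"
  proof (rule ccontr)
    assume "\<not> a \<le> a'"
    then have "take a bs ! a' = i" "a' < length (take a bs)" using a' a(1) by auto
    then have "i \<in> set (take a bs)" by (metis nth_mem)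
    then show False using a(3) by (simp add: count_list_0_iff)
  qed
  then show ?thesis using a a' b by (intro exI[of _ a] exI[of _ b]) auto
next
  fix i j assume uv: "(u, v) = (comb_label t i j, comb_label t i (j + 1))"
    and ij: "1 \<le> i" "i \<le> s" "1 \<le> j" "j \<le> t - 1"
  have "j + 1 \<le> t" using ij t by linarith
  obtain a where a: "a < length bs" "bs ! a = i" "count_list (take a bs) i + 1 = j"
    "comb_standardize t bs ! a = u"
    using comb_standardize_position[OF bs, of i j] \<open>j + 1 \<le> t\<close> ij uv by auto
  obtain b where b: "b < length bs" "bs ! b = i" "count_list (take b bs) i = j"
    "comb_standardize t bs ! b = v"
    using comb_standardize_position[OF bs, of i "j + 1"] \<open>j + 1 \<le> t\<close> ij uv by auto
  have "\<not> b < a" using count_list_take_nth_strict_mono[of b a bs] a b by auto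
  moreover have "a \<noteq> b" using a(3) b(3) by auto
  ultimately have "a < b" by linarith
  then show ?thesis using a b by auto
qed

lemma comb_standardize_linear_extension:
  assumes "comb_row_word s t bs" "1 \<le> t"
  shows "comb_standardize t bs \<in> linear_extensions s t"
  unfolding linear_extensions_def comb_less_def
  using distinct_comb_standardize[OF assms(1)] set_comb_standardize[OF assms(1)]
    distinct_nth_less_if_trancl[OF distinct_comb_standardize[OF assms(1)]
      comb_standardize_respects_covers[OF assms]]
  by auto

lemma comb_standardize_descent:
  assumes "comb_row_word s t bs" "x < y" "y < length bs"
    and "comb_standardize t bs ! y < comb_standardize t bs ! x"
  shows "bs ! y < bs ! x"
proof -
  have "bs ! y \<le> bs ! x"
    using monoD[OF comb_row_mono, of "comb_standardize t bs ! y" "comb_standardize t bs ! x" t] assms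
      comb_standardize_nth_label(2)[OF assms(1)] by simp
  moreover have "bs ! y \<noteq> bs ! x"
  proof
    assume "bs ! y = bs ! x"
    then show False
      using count_list_take_nth_strict_mono[of x y bs] assms
        comb_standardize_nth_label(1)[OF assms(1), of x] comb_standardize_nth_label(1)[OF assms(1), of y]
      by (simp add: comb_label_def)
  qed
  ultimately show ?thesis by simp
qed

lemma contains_321_comb_standardize:
  assumes "comb_row_word s t bs" "contains_321 (comb_standardize t bs)"
  shows "contains_321 bs"
proof -
  obtain a b c where "a < b" "b < c" "c < length bs"
    "comb_standardize t bs ! b < comb_standardize t bs ! a" "comb_standardize t bs ! c < comb_standardize t bs ! b"
    using assms(2) unfolding contains_321_def by auto
  then show ?thesis
    using comb_standardize_descent[OF assms(1)] unfolding contains_321_def by (meson order.strict_trans)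
qed

lemma card_321_avoiding_row_words_le:
  assumes "1 \<le> t"
  shows "card {bs. comb_row_word s t bs \<and> \<not> contains_321 bs} \<le> A321_comb s t"
  unfolding A321_comb_def
proof (rule card_inj_on_le)
  show "inj_on (comb_standardize t) {bs. comb_row_word s t bs \<and> \<not> contains_321 bs}"
    by (rule inj_on_inverseI[where g = "map (comb_row t)"]) (blast intro: map_comb_row_standardize)
  show "comb_standardize t ` {bs. comb_row_word s t bs \<and> \<not> contains_321 bs}
      \<subseteq> {w \<in> linear_extensions s t. \<not> contains_321 w}"
    using comb_standardize_linear_extension[OF _ assms] contains_321_comb_standardize by blast
  show "finite {w \<in> linear_extensions s t. \<not> contains_321 w}"
    by (rule finite_subset[of _ "{w. set w \<subseteq> {1..s * t} \<and> length w = s * t}"])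
      (auto dest: linear_extensionD intro: finite_lists_length_eq)
qed

section \<open>A family of 321-avoiding row words\<close>

text \<open>
  The sizes
  \<open>chunk_high_count t c\<close> alternate between \<open>t div 2\<close> and \<open>t - t div 2\<close>, which makes
  every letter occur exactly \<open>t\<close> times, and slot 0 of chunk 0 is reserved so that the
  word starts with the letter 1.
\<close>

definition chunk_low :: "nat \<Rightarrow> nat" where
  "chunk_low c = max c 1"

definition chunk_high :: "nat \<Rightarrow> nat \<Rightarrow> nat" where
  "chunk_high s c = min (c + 2) s"

definition chunk_high_count :: "nat \<Rightarrow> nat \<Rightarrow> nat" where
  "chunk_high_count t c = (if even c then t div 2 else t - t div 2)"

definition chunk_slots :: "nat \<Rightarrow> nat \<Rightarrow> nat set" where
  "chunk_slots t c = (if c = 0 then {1..<t} else {..<t})"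

definition chunk_choices :: "nat \<Rightarrow> nat \<Rightarrow> (nat \<Rightarrow> nat set) set" where
  "chunk_choices s t =
     (\<Pi>\<^sub>E c\<in>{..<s}. {A. A \<subseteq> chunk_slots t c \<and> card A = chunk_high_count t c})"

definition chunk_letter :: "nat \<Rightarrow> nat \<Rightarrow> (nat \<Rightarrow> nat set) \<Rightarrow> nat \<Rightarrow> nat" where
  "chunk_letter s t S p =
     (if p mod t \<in> S (p div t) then chunk_high s (p div t) else chunk_low (p div t))"

definition chunk_word :: "nat \<Rightarrow> nat \<Rightarrow> (nat \<Rightarrow> nat set) \<Rightarrow> nat list" where
  "chunk_word s t S = map (chunk_letter s t S) [0..<s * t]"

lemma chunk_letter_chunk:
  assumes "j < t"
  shows "chunk_letter s t S (c * t + j) = (if j \<in> S c then chunk_high s c else chunk_low c)"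
  using assms by (simp add: chunk_letter_def)

lemma chunk_low_ne_high: "s \<ge> 2 \<Longrightarrow> c < s \<Longrightarrow> chunk_low c \<noteq> chunk_high s c"
  by (auto simp: chunk_low_def chunk_high_def)

lemma chunk_choicesD:
  assumes "S \<in> chunk_choices s t" "c < s"
  shows "S c \<subseteq> chunk_slots t c" "card (S c) = chunk_high_count t c" "S c \<subseteq> {..<t}"
proof -
  show "S c \<subseteq> chunk_slots t c" "card (S c) = chunk_high_count t c"
    using assms by (auto simp: chunk_choices_def)
  moreover have "chunk_slots t c \<subseteq> {..<t}" by (auto simp: chunk_slots_def)
  ultimately show "S c \<subseteq> {..<t}" by blast
qed

lemma chunk_letter_range:
  assumes "s \<ge> 1" "p < s * t"
  shows "chunk_letter s t S p \<in> {1..s}"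
  using assms less_mult_imp_div_less[OF assms(2)]
  by (auto simp: chunk_letter_def chunk_low_def chunk_high_def)

lemma chunk_count:
  assumes "S \<in> chunk_choices s t" "c < s"
  shows "(\<Sum>j<t. if chunk_letter s t S (c * t + j) = k then 1 else 0)
       = (if chunk_high s c = k then chunk_high_count t c else 0)
         + (if chunk_low c = k then t - chunk_high_count t c else 0)"
proof -
  have S: "S c \<subseteq> {..<t}" "card (S c) = chunk_high_count t c" using chunk_choicesD[OF assms(1,2)] by auto
  have "(\<Sum>j<t. if chunk_letter s t S (c * t + j) = k then 1 else 0)
      = (\<Sum>j<t. if j \<in> S c then (if chunk_high s c = k then 1 else 0) else (if chunk_low c = k then 1 else 0))"
    by (rule sum.cong) (simp_all add: chunk_letter_chunk)
  also have "\<dots> = (if chunk_high s c = k then card (S c) else 0) + (if chunk_low c = k then card ({..<t} - S c) else 0)"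
    using S(1) by (simp add: sum.If_cases Int_absorb1 Diff_eq[symmetric])
  also have "\<dots> = (if chunk_high s c = k then chunk_high_count t c else 0)
         + (if chunk_low c = k then t - chunk_high_count t c else 0)"
    using S by (simp add: card_Diff_subset finite_subset)
  finally show ?thesis .
qed

lemma sum_chunk_counts:
  assumes s: "s \<ge> 2" and k: "1 \<le> k" "k \<le> s"
  shows "(\<Sum>c<s. (if chunk_high s c = k then chunk_high_count t c else 0)
                  + (if chunk_low c = k then t - chunk_high_count t c else 0)) = t"
proof -
  have split: "(\<Sum>c<s. (if chunk_high s c = k then chunk_high_count t c else 0)
                  + (if chunk_low c = k then t - chunk_high_count t c else 0))
     = sum (chunk_high_count t) {c \<in> {..<s}. chunk_high s c = k}
       + sum (\<lambda>c. t - chunk_high_count t c) {c \<in> {..<s}. chunk_low c = k}"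
    unfolding sum.distrib by (simp only: sum.inter_filter[OF finite_lessThan])
  have half: "t div 2 \<le> t" by simp
  consider "k = 1" | "2 \<le> k" "k < s" | "k = s" "k \<noteq> 1" using k by linarith
  then show ?thesis
  proof cases
    case 1
    have high: "{c \<in> {..<s}. chunk_high s c = k} = {}"
      and low: "{c \<in> {..<s}. chunk_low c = k} = {0, 1}"
      using 1 s by (auto simp: chunk_high_def chunk_low_def)
    show ?thesis unfolding split high low using half by (simp add: chunk_high_count_def)
  next
    case 2
    have high: "{c \<in> {..<s}. chunk_high s c = k} = {k - 2}"
      and low: "{c \<in> {..<s}. chunk_low c = k} = {k}"
      using 2 s by (auto simp: chunk_high_def chunk_low_def)
    have "chunk_high_count t (k - 2) = chunk_high_count t k"
      using 2 by (auto simp: chunk_high_count_def elim!: evenE oddE)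
    then show ?thesis unfolding split high low by (simp add: chunk_high_count_def)
  next
    case 3
    have high: "{c \<in> {..<s}. chunk_high s c = k} = {s - 2, s - 1}"
      and low: "{c \<in> {..<s}. chunk_low c = k} = {}"
      using 3 s by (auto simp: chunk_high_def chunk_low_def)
    have "s - 1 = Suc (s - 2)" using s by simp
    then show ?thesis unfolding split high low using half by (simp add: chunk_high_count_def)
  qed
qed

lemma count_list_chunk_word:
  assumes "S \<in> chunk_choices s t" "s \<ge> 2" "1 \<le> k" "k \<le> s"
  shows "count_list (chunk_word s t S) k = t"
proof -
  have "count_list (chunk_word s t S) k = (\<Sum>c<s. \<Sum>j<t. if chunk_letter s t S (c * t + j) = k then 1 else 0)"
    unfolding chunk_word_def count_list_map_upt by (rule sum_lessThan_mult_split)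
  also have "\<dots> = t"
    using chunk_count[OF assms(1)] sum_chunk_counts[OF assms(2-4)] by simp
  finally show ?thesis .
qed

lemma chunk_letter_predecessor:
  assumes s: "s \<ge> 2" and t: "t \<ge> 2" and S: "S \<in> chunk_choices s t"
    and b: "b < s * t" "chunk_letter s t S b = i + 1" and i: "1 \<le> i"
  shows "\<exists>a<b. chunk_letter s t S a = i"
proof (cases "i = 1")
  case True
  have "0 \<notin> S 0" using chunk_choicesD(1)[OF S, of 0] s by (auto simp: chunk_slots_def)
  then have first: "chunk_letter s t S 0 = 1" by (simp add: chunk_letter_def chunk_low_def)
  then have "0 < b" using b(2) True by (cases b) auto
  then show ?thesis using first True by blast
next
  case False
  define m where "m = i - 2"
  have m: "i = m + 2" using i False by (simp add: m_def)
  have "i - 1 \<le> b div t"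
    using b(2) by (auto simp: chunk_letter_def chunk_low_def chunk_high_def split: if_splits)
  have "m < s" using m b(2) chunk_letter_range[of s b t S] s b(1) by simp
  moreover have "1 \<le> t div 2" "1 \<le> t - t div 2" using t by presburger+
  ultimately have "card (S m) \<ge> 1"
    using chunk_choicesD(2)[OF S] by (simp add: chunk_high_count_def)
  then obtain j where j: "j \<in> S m" by (metis card.empty ex_in_conv not_one_le_zero)
  have "j < t" using chunk_choicesD(3)[OF S \<open>m < s\<close>] j by auto
  then have "m * t + j < (i - 1) * t" using m by simp
  also have "\<dots> \<le> b div t * t" using \<open>i - 1 \<le> b div t\<close> by simp
  also have "\<dots> \<le> b" by (rule div_times_less_eq_dividend)
  finally show ?thesis
    using chunk_letter_chunk[OF \<open>j < t\<close>, of s S m] j m \<open>m < s\<close> b(2)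
      chunk_letter_range[of s b t S] s b(1)
    by (intro exI[of _ "m * t + j"]) (auto simp: chunk_high_def)
qed

lemma chunk_word_row_word:
  assumes "s \<ge> 2" "t \<ge> 2" "S \<in> chunk_choices s t"
  shows "comb_row_word s t (chunk_word s t S)"
  unfolding comb_row_word_def
proof (intro conjI ballI allI impI)
  show "set (chunk_word s t S) \<subseteq> {1..s}"
    using chunk_letter_range[of s _ t S] assms(1) by (auto simp: chunk_word_def)
  show "count_list (chunk_word s t S) k = t" if "k \<in> {1..s}" for k
    using count_list_chunk_word[OF assms(3,1)] that by simp
  fix b assume b: "b < length (chunk_word s t S)" and "2 \<le> chunk_word s t S ! b"
  moreover define i where "i = chunk_letter s t S b - 1"
  ultimately have "chunk_letter s t S b = i + 1" "1 \<le> i" "b < s * t"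
    by (simp_all add: chunk_word_def)
  then obtain a where "a < b" "chunk_letter s t S a = i"
    using chunk_letter_predecessor[OF assms] by blast
  then show "chunk_word s t S ! b - 1 \<in> set (take b (chunk_word s t S))"
    using \<open>chunk_letter s t S b = i + 1\<close> \<open>b < s * t\<close>
    by (auto simp: chunk_word_def in_set_conv_nth intro!: exI[of _ a])
qed

lemma chunk_word_not_contains_321:
  "\<not> contains_321 (chunk_word s t S)"
proof (rule not_contains_321_if_two_sorted_classes[where C = "\<lambda>p. p mod t \<in> S (p div t)"])
  fix p q assume "p < q" "q < length (chunk_word s t S)"
    and same_class: "(p mod t \<in> S (p div t)) = (q mod t \<in> S (q div t))"
  moreover have "p div t \<le> q div t" using \<open>p < q\<close> by (simp add: div_le_mono)
  ultimately show "chunk_word s t S ! p \<le> chunk_word s t S ! q"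
    by (auto simp: chunk_word_def chunk_letter_def chunk_low_def chunk_high_def)
qed

lemma chunk_word_inj_on:
  assumes "s \<ge> 2"
  shows "inj_on (chunk_word s t) (chunk_choices s t)"
proof (rule inj_onI)
  fix S S' assume S: "S \<in> chunk_choices s t" and S': "S' \<in> chunk_choices s t"
    and eq: "chunk_word s t S = chunk_word s t S'"
  show "S = S'"
  proof (rule ext)
    fix c
    show "S c = S' c"
    proof (cases "c < s")
      case True
      have "j \<in> S c \<longleftrightarrow> j \<in> S' c" if "j < t" for j
      proof -
        have "c * t + j < s * t"
          using True that mult_le_mono1[of "Suc c" s t] by simp
        then have "chunk_letter s t S (c * t + j) = chunk_letter s t S' (c * t + j)"
          using arg_cong[OF eq, of "\<lambda>w. w ! (c * t + j)"] by (simp add: chunk_word_def)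
        then have "(if j \<in> S c then chunk_high s c else chunk_low c)
            = (if j \<in> S' c then chunk_high s c else chunk_low c)"
          by (simp only: chunk_letter_chunk[OF that])
        then show ?thesis using chunk_low_ne_high[OF assms True] by argo
      qed
      then show ?thesis using chunk_choicesD(3)[OF S True] chunk_choicesD(3)[OF S' True] by blast
    next
      case False
      then show ?thesis
        using PiE_arb[OF S[unfolded chunk_choices_def]] PiE_arb[OF S'[unfolded chunk_choices_def]] by simp
    qed
  qed
qed

lemma card_chunk_choices:
  "card (chunk_choices s t) = (\<Prod>c<s. card (chunk_slots t c) choose chunk_high_count t c)"
proof -
  have "card (chunk_choices s t) = (\<Prod>c<s. card {A. A \<subseteq> chunk_slots t c \<and> card A = chunk_high_count t c})"
    unfolding chunk_choices_def by (rule card_PiE) simp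
  also have "\<dots> = (\<Prod>c<s. card (chunk_slots t c) choose chunk_high_count t c)"
    by (rule prod.cong[OF refl]) (simp add: n_subsets chunk_slots_def)
  finally show ?thesis .
qed

lemma prod_binomial_le_A321_comb:
  assumes "s \<ge> 2" "t \<ge> 2"
  shows "(\<Prod>c<s. card (chunk_slots t c) choose chunk_high_count t c) \<le> A321_comb s t"
proof -
  have "card (chunk_choices s t) \<le> card {bs. comb_row_word s t bs \<and> \<not> contains_321 bs}"
  proof (rule card_inj_on_le[OF chunk_word_inj_on[OF assms(1)]])
    show "chunk_word s t ` chunk_choices s t \<subseteq> {bs. comb_row_word s t bs \<and> \<not> contains_321 bs}"
      using chunk_word_row_word[OF assms] chunk_word_not_contains_321 by blast
    show "finite {bs. comb_row_word s t bs \<and> \<not> contains_321 bs}"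
    proof (rule finite_subset[OF _ finite_lists_length_eq[OF finite_atLeastAtMost]])
      show "{bs. comb_row_word s t bs \<and> \<not> contains_321 bs} \<subseteq> {xs. set xs \<subseteq> {1..s} \<and> length xs = s * t}"
        using comb_row_wordD(1) comb_row_word_length by blast
    qed
  qed
  also have "\<dots> \<le> A321_comb s t"
    using assms(2) by (intro card_321_avoiding_row_words_le) simp
  finally show ?thesis by (simp only: card_chunk_choices)
qed

lemma central_binomial_lower_bound:
  assumes "k = m div 2 \<or> k = m - m div 2"
  shows "2 ^ m \<le> (m + 1) * (m choose k)"
proof -
  have "m choose k = m choose (m div 2)"
    using assms binomial_symmetric[of "m div 2" m] by auto
  moreover have "(2::nat) ^ m = (\<Sum>i\<le>m. m choose i)" by (simp add: choose_row_sum)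
  moreover have "(\<Sum>i\<le>m. m choose i) \<le> (\<Sum>i\<le>m. m choose (m div 2))"
    by (intro sum_mono binomial_maximum)
  ultimately show ?thesis by simp
qed

lemma two_pow_le_chunk_binomial:
  assumes "t \<ge> 2"
  shows "2 ^ t \<le> (2 * t + 2) * (card (chunk_slots t c) choose chunk_high_count t c)"
proof (cases "c = 0")
  case True
  obtain m where m: "t = m + 1" using assms by (metis add.commute le_Suc_ex one_add_one add_leD1)
  have "t div 2 = m div 2 \<or> t div 2 = m - m div 2" unfolding m by presburger
  then have "2 ^ m \<le> (m + 1) * (m choose (t div 2))" by (rule central_binomial_lower_bound)
  then have "2 ^ t \<le> 2 * t * (m choose (t div 2))" using m by simp
  also have "\<dots> \<le> (2 * t + 2) * (m choose (t div 2))" by simp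
  finally show ?thesis using True m by (simp add: chunk_slots_def chunk_high_count_def)
next
  case False
  have "chunk_high_count t c = t div 2 \<or> chunk_high_count t c = t - t div 2"
    by (simp add: chunk_high_count_def)
  then have "2 ^ t \<le> (t + 1) * (t choose chunk_high_count t c)" by (rule central_binomial_lower_bound)
  then show ?thesis using False by (simp add: chunk_slots_def)
qed

lemma two_pow_le_A321_comb:
  assumes "s \<ge> 2" "t \<ge> 2"
  shows "2 ^ (s * t) \<le> (2 * t + 2) ^ s * A321_comb s t"
proof -
  have "(2::nat) ^ (s * t) = (\<Prod>c<s. 2 ^ t)" by (simp add: mult.commute[of s t] power_mult)
  also have "\<dots> \<le> (\<Prod>c<s. (2 * t + 2) * (card (chunk_slots t c) choose chunk_high_count t c))"
    by (intro prod_mono conjI zero_le two_pow_le_chunk_binomial[OF assms(2)])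
  also have "\<dots> = (2 * t + 2) ^ s * (\<Prod>c<s. card (chunk_slots t c) choose chunk_high_count t c)"
    by (simp only: prod.distrib prod_constant card_lessThan power_mult_distrib)
  also have "\<dots> \<le> (2 * t + 2) ^ s * A321_comb s t"
    using prod_binomial_le_A321_comb[OF assms] by (rule mult_le_mono2)
  finally show ?thesis .
qed

section \<open>Asymptotics\<close>

lemma LIMSEQ_root_linear:
  fixes a b :: nat
  assumes "a \<ge> 1" "b \<ge> 1"
  shows "(\<lambda>t. root t (real (a * t + b))) \<longlonglongrightarrow> 1"
proof (rule tendsto_sandwich[of "\<lambda>_. 1" _ sequentially "\<lambda>t. root t (real (a + b)) * root t (real t)"])
  show "eventually (\<lambda>t. 1 \<le> root t (real (a * t + b))) sequentially"
  proof (rule eventually_sequentiallyI[of 1])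
    fix t :: nat assume "t \<ge> 1"
    moreover have "1 \<le> real (a * t + b)" using assms by linarith
    ultimately show "1 \<le> root t (real (a * t + b))" by simp
  qed
  show "eventually (\<lambda>t. root t (real (a * t + b)) \<le> root t (real (a + b)) * root t (real t)) sequentially"
  proof (rule eventually_sequentiallyI[of 1])
    fix t :: nat assume "t \<ge> 1"
    then have "real (a * t + b) \<le> real (a + b) * real t"
      by (simp add: algebra_simps flip: of_nat_mult)
    then show "root t (real (a * t + b)) \<le> root t (real (a + b)) * root t (real t)"
      using \<open>t \<ge> 1\<close> by (simp add: real_root_mult[symmetric])
  qed
  have "(\<lambda>t. root t (real (a + b)) * root t (real t)) \<longlonglongrightarrow> 1 * 1"
    by (intro tendsto_mult LIMSEQ_root_const LIMSEQ_root) (use assms in simp)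
  then show "(\<lambda>t. root t (real (a + b)) * root t (real t)) \<longlonglongrightarrow> 1" by simp
qed simp

lemma LIMSEQ_root_linear_power:
  fixes a b k :: nat
  assumes "a \<ge> 1" "b \<ge> 1"
  shows "(\<lambda>t. root t (real ((a * t + b) ^ k))) \<longlonglongrightarrow> 1"
proof (rule Lim_transform_eventually)
  show "(\<lambda>t. root t (real (a * t + b)) ^ k) \<longlonglongrightarrow> 1"
    using tendsto_power[OF LIMSEQ_root_linear[OF assms], of k] by simp
  show "eventually (\<lambda>t. root t (real (a * t + b)) ^ k = root t (real ((a * t + b) ^ k))) sequentially"
    by (rule eventually_sequentiallyI[of 1]) (simp add: real_root_power)
qed

lemma LIMSEQ_root_sandwich:
  fixes a p q :: "nat \<Rightarrow> nat" and x :: nat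
  assumes "x > 0"
    and lower: "eventually (\<lambda>t. x ^ t \<le> p t * a t) sequentially"
    and upper: "eventually (\<lambda>t. a t \<le> x ^ t * q t) sequentially"
    and p: "(\<lambda>t. root t (real (p t))) \<longlonglongrightarrow> 1" and q: "(\<lambda>t. root t (real (q t))) \<longlonglongrightarrow> 1"
  shows "(\<lambda>t. root t (real (a t))) \<longlonglongrightarrow> real x"
proof (rule tendsto_sandwich[of "\<lambda>t. x / root t (p t)" _ sequentially "\<lambda>t. x * root t (q t)"])
  have root_pow: "root t (real x ^ t) = x" if "t \<ge> 1" for t
    using that by (simp add: real_root_power_cancel)
  show "eventually (\<lambda>t. x / root t (p t) \<le> root t (a t)) sequentially"
    using lower eventually_ge_at_top[of 1]
  proof eventually_elim
    case (elim t)
    then have "real x ^ t \<le> real (p t) * real (a t)" by (metis of_nat_le_iff of_nat_mult of_nat_power)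
    then have "root t (real x ^ t) \<le> root t (real (p t) * real (a t))"
      using elim by (subst real_root_le_iff) auto
    then have "x \<le> root t (p t) * root t (a t)" using elim root_pow[of t] by (simp add: real_root_mult)
    moreover have "p t > 0" using elim \<open>x > 0\<close> by (metis mult_0 not_le power_not_zero zero_less_iff_neq_zero)
    ultimately show ?case using elim by (simp add: divide_le_eq mult.commute)
  qed
  show "eventually (\<lambda>t. root t (a t) \<le> x * root t (q t)) sequentially"
    using upper eventually_ge_at_top[of 1]
  proof eventually_elim
    case (elim t)
    then have "real (a t) \<le> real x ^ t * real (q t)" by (metis of_nat_le_iff of_nat_mult of_nat_power)
    then have "root t (real (a t)) \<le> root t (real x ^ t * real (q t))"
      using elim by (subst real_root_le_iff) auto
    then show ?case using elim root_pow[of t] by (simp add: real_root_mult)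
  qed
  show "(\<lambda>t. x / root t (p t)) \<longlonglongrightarrow> x"
    using tendsto_divide[OF tendsto_const p, of "real x"] by simp
  show "(\<lambda>t. x * root t (q t)) \<longlonglongrightarrow> x"
    using tendsto_mult[OF tendsto_const q, of "real x"] by simp
qed

theorem theorem6:
  fixes s :: nat
  assumes "s \<ge> 2"
  shows "(\<lambda>t. root t (real (A321_comb s t))) \<longlonglongrightarrow> 2 ^ s"
proof -
  have "(\<lambda>t. root t (real (A321_comb s t))) \<longlonglongrightarrow> real (2 ^ s)"
  proof (rule LIMSEQ_root_sandwich)
    show "eventually (\<lambda>t. (2 ^ s) ^ t \<le> (2 * t + 2) ^ s * A321_comb s t) sequentially"
      using two_pow_le_A321_comb[OF assms] by (intro eventually_sequentiallyI[of 2]) (simp add: power_mult)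
    show "eventually (\<lambda>t. A321_comb s t \<le> (2 ^ s) ^ t * (s * t + 1) ^ (2 * s)) sequentially"
      using A321_comb_le by (simp add: power_mult)
    show "(\<lambda>t. root t (real ((2 * t + 2) ^ s))) \<longlonglongrightarrow> 1"
      by (rule LIMSEQ_root_linear_power) simp_all
    show "(\<lambda>t. root t (real ((s * t + 1) ^ (2 * s)))) \<longlonglongrightarrow> 1"
      by (rule LIMSEQ_root_linear_power) (use assms in simp_all)
  qed simp
  then show ?thesis by simp
qed

end
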